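(* Let $E$ be a Banach space, $\Omega\subset\mathbb{R}^d$ open, $k\in\mathbb{N}_0$ and $0<\gamma\le1$. Let $(f_\iota)_{\iota\in I}$ be a bounded net in $\mathcal{C}^{k,\gamma}_{loc}(\Omega,E)$, and suppose either (i) $\lim_\iota f_\iota(x)$ exists for all $x$ in a dense subset $U\subset\Omega$, or (ii) $k\ge1$, $\Omega$ is connected, $\lim_\iota(\partial^{e_n})^Ef_\iota(x)$ exists for all $1\le n\le d$ and all $x$ in a dense subset $U\subset\Omega$, and there is $x_0\in\Omega$ such that $\lim_\iota f_\iota(x_0)$ exists. Then there is $f\in\mathcal{C}^{k,\gamma}_{loc}(\Omega,E)$ such that $(f_\iota)_{\iota\in I}$ converges to $f$ in $(\mathcal{C}^k(\Omega,E),\tau_{\mathcal{C}^k})$.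
   Context: $E$ is a Banach space over $\mathbb{K}\in\{\mathbb{R},\mathbb{C}\}$ with norm $\|\cdot\|$. $\mathcal{C}^{k,\gamma}_{loc}(\Omega,E)$ is the space of $k$-times continuously partially differentiable $f\colon\Omega\to E$ such that for each compact $K\subset\Omega$ the seminorm $|f|_K:=\max\bigl(\sup_{x\in K,|\beta|\le k}\|(\partial^\beta)^Ef(x)\|,\ \sup_{|\beta|=k}\sup_{x\ne y\in K}\frac{\|(\partial^\beta)^Ef(x)-(\partial^\beta)^Ef(y)\|}{|x-y|^\gamma}\bigr)$ is finite; a net is bounded if $\sup_\iota|f_\iota|_K<\infty$ for every compact $K$. $\tau_{\mathcal{C}^k}$ is the topology of uniform convergence of all partial derivatives of order $\le k$ on compact subsets of $\Omega$ (seminorms $\sup_{x\in K,|\beta|\le m}\|(\partial^\beta)^Ef(x)\|$, $K$ compact, $m\le k$). *)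

theory Defs
  imports "HOL-Analysis.Analysis"
begin

text \<open>Partial derivative in the direction of the i-th standard basis vector e_i of R^d
  (here R^d is modelled as real^'n, d = CARD('n)).\<close>
definition pdiff :: "'n::finite \<Rightarrow> (real^'n \<Rightarrow> 'e::real_normed_vector) \<Rightarrow> real^'n \<Rightarrow> 'e" where
  "pdiff i f x = vector_derivative (\<lambda>t. f (x + t *\<^sub>R axis i 1)) (at 0)"

text \<open>Iterated partial derivative along a list of directions (a multi-index of order = length).\<close>
fun pdiffs :: "'n::finite list \<Rightarrow> (real^'n \<Rightarrow> 'e::real_normed_vector) \<Rightarrow> real^'n \<Rightarrow> 'e" where
  "pdiffs [] f = f"
| "pdiffs (i # is) f = pdiff i (pdiffs is f)"

fun Ck_on :: "nat \<Rightarrow> (real^'n::finite) set \<Rightarrow> (real^'n \<Rightarrow> 'e::real_normed_vector) \<Rightarrow> bool" where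
  "Ck_on 0 \<Omega> f = continuous_on \<Omega> f"
| "Ck_on (Suc m) \<Omega> f = (continuous_on \<Omega> f \<and>
      (\<forall>i. \<forall>x\<in>\<Omega>. (\<lambda>t. f (x + t *\<^sub>R axis i 1)) differentiable (at 0)) \<and>
      (\<forall>i. Ck_on m \<Omega> (pdiff i f)))"

definition holder_bound :: "nat \<Rightarrow> real \<Rightarrow> (real^'n::finite) set \<Rightarrow> (real^'n \<Rightarrow> 'e::real_normed_vector) \<Rightarrow> real \<Rightarrow> bool" where
  "holder_bound k \<gamma> K f C \<longleftrightarrow>
     (\<forall>\<beta> x. length \<beta> \<le> k \<longrightarrow> x \<in> K \<longrightarrow> norm (pdiffs \<beta> f x) \<le> C) \<and>
     (\<forall>\<beta> x y. length \<beta> = k \<longrightarrow> x \<in> K \<longrightarrow> y \<in> K \<longrightarrow> x \<noteq> y \<longrightarrow>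
        norm (pdiffs \<beta> f x - pdiffs \<beta> f y) \<le> C * dist x y powr \<gamma>)"

definition Ck_gamma_loc :: "nat \<Rightarrow> real \<Rightarrow> (real^'n::finite) set \<Rightarrow> (real^'n \<Rightarrow> 'e::real_normed_vector) \<Rightarrow> bool" where
  "Ck_gamma_loc k \<gamma> \<Omega> f \<longleftrightarrow> Ck_on k \<Omega> f \<and>
     (\<forall>K. compact K \<and> K \<subseteq> \<Omega> \<longrightarrow> (\<exists>C. holder_bound k \<gamma> K f C))"

definition directed_set :: "'i set \<Rightarrow> ('i \<Rightarrow> 'i \<Rightarrow> bool) \<Rightarrow> bool" where
  "directed_set I R \<longleftrightarrow> I \<noteq> {} \<and> (\<forall>a\<in>I. R a a) \<and>
     (\<forall>a\<in>I. \<forall>b\<in>I. \<forall>c\<in>I. R a b \<longrightarrow> R b c \<longrightarrow> R a c) \<and>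
     (\<forall>a\<in>I. \<forall>b\<in>I. \<exists>c\<in>I. R a c \<and> R b c)"

definition net_filter :: "'i set \<Rightarrow> ('i \<Rightarrow> 'i \<Rightarrow> bool) \<Rightarrow> 'i filter" where
  "net_filter I R = (INF a\<in>I. principal {b\<in>I. R a b})"

end

theory Submission
  imports Defs
begin

text \<open>
  The proof propagates Cauchy properties of the net rather than limits.  Uniform bounds on
  the Holder seminorms make all derivatives of order at most \<open>k\<close> uniformly locally Holder
  continuous (below order \<open>k\<close> by the mean value theorem along coordinate staircases), so a net
  that is Cauchy on a dense set is uniformly Cauchy on compact sets.  Uniform Cauchyness of
  \<open>\<partial>\<^sup>\<beta> f\<^sub>\<iota>\<close> passes to \<open>\<partial>\<^sub>i \<partial>\<^sup>\<beta> f\<^sub>\<iota>\<close>: a difference quotient with step \<open>t\<close> differs from the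
  derivative by at most \<open>M t\<^sup>\<gamma>\<close>, uniformly in \<open>\<iota>\<close>, so one first fixes \<open>t\<close> and then
  goes far enough along the net.  In case (ii), uniformly Cauchy first derivatives make the
  increments \<open>f\<^sub>\<iota> y - f\<^sub>\<iota> x\<close> Cauchy for nearby \<open>x, y\<close>, so the points where \<open>f\<^sub>\<iota>\<close> is Cauchy
  form an open and closed subset of the connected domain.  Finally, the limits of the
  derivatives satisfy the same uniform remainder estimate, hence are the partial derivatives
  of the limit, and the Holder bounds survive the passage to the limit.
\<close>

lemma eventually_net_filter:
  assumes "directed_set I R"
  shows "eventually P (net_filter I R) \<longleftrightarrow> (\<exists>a\<in>I. \<forall>b\<in>I. R a b \<longrightarrow> P b)"
proof -
  from assms have ne: "I \<noteq> {}"
    and trans: "\<And>a b c. a \<in> I \<Longrightarrow> b \<in> I \<Longrightarrow> c \<in> I \<Longrightarrow> R a b \<Longrightarrow> R b c \<Longrightarrow> R a c"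
    and up: "\<And>a b. a \<in> I \<Longrightarrow> b \<in> I \<Longrightarrow> \<exists>c\<in>I. R a c \<and> R b c"
    unfolding directed_set_def by blast+
  have "\<exists>c\<in>I. principal {x\<in>I. R c x} \<le> inf (principal {x\<in>I. R a x}) (principal {x\<in>I. R b x})"
    if ab: "a \<in> I" "b \<in> I" for a b
  proof -
    obtain c where c: "c \<in> I" "R a c" "R b c" using up[OF ab] by blast
    have "{x\<in>I. R c x} \<subseteq> {x\<in>I. R a x} \<inter> {x\<in>I. R b x}"
      using trans[OF ab(1) c(1) _ c(2)] trans[OF ab(2) c(1) _ c(3)] by auto
    with c(1) show ?thesis by (auto simp: inf_principal)
  qed
  with ne have "eventually P (INF a\<in>I. principal {b\<in>I. R a b}) \<longleftrightarrow> (\<exists>a\<in>I. eventually P (principal {b\<in>I. R a b}))"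
    by (intro eventually_INF_base) auto
  then show ?thesis
    unfolding net_filter_def eventually_principal by blast
qed

lemma net_filter_ne_bot:
  assumes "directed_set I R"
  shows "net_filter I R \<noteq> bot"
proof -
  from assms have "I \<noteq> {}" "\<forall>a\<in>I. R a a" unfolding directed_set_def by blast+
  then show ?thesis
    unfolding eventually_False[symmetric] eventually_net_filter[OF assms] by auto
qed

lemma eventually_mem_net_filter:
  assumes "directed_set I R"
  shows "\<forall>\<^sub>F \<iota> in net_filter I R. \<iota> \<in> I"
proof -
  from assms obtain a where "a \<in> I" unfolding directed_set_def by blast
  then show ?thesis unfolding eventually_net_filter[OF assms] by blast
qed

definition uniformly_cauchy_on :: "'i filter \<Rightarrow> 'a set \<Rightarrow> ('i \<Rightarrow> 'a \<Rightarrow> 'b::metric_space) \<Rightarrow> bool" where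
  "uniformly_cauchy_on F K X \<longleftrightarrow>
     (\<forall>e>0. \<forall>\<^sub>F (b, c) in F \<times>\<^sub>F F. \<forall>x\<in>K. dist (X b x) (X c x) \<le> e)"

lemma uniformly_cauchy_onD:
  "uniformly_cauchy_on F K X \<Longrightarrow> 0 < e \<Longrightarrow>
    \<forall>\<^sub>F p in F \<times>\<^sub>F F. \<forall>x\<in>K. dist (X (fst p) x) (X (snd p) x) \<le> e"
  by (simp add: uniformly_cauchy_on_def case_prod_unfold)

lemma uniformly_cauchy_onE:
  assumes "uniformly_cauchy_on F K X" "0 < e"
  obtains Q where "eventually Q F" "\<And>b c x. Q b \<Longrightarrow> Q c \<Longrightarrow> x \<in> K \<Longrightarrow> dist (X b x) (X c x) \<le> e"
  using assms unfolding uniformly_cauchy_on_def eventually_prod_same by force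

lemma tendsto_imp_uniformly_cauchy_on_singleton:
  assumes "((\<lambda>i. X i x) \<longlongrightarrow> l) F"
  shows "uniformly_cauchy_on F {x} X"
  unfolding uniformly_cauchy_on_def
proof (intro allI impI)
  fix e :: real assume "0 < e"
  then have near: "\<forall>\<^sub>F i in F. dist (X i x) l < e/2"
    by (intro tendstoD[OF assms]) simp
  have "\<forall>\<^sub>F p in F \<times>\<^sub>F F. dist (X (fst p) x) l < e/2 \<and> dist (X (snd p) x) l < e/2"
    by (rule eventually_prodI[OF near near])
  then show "\<forall>\<^sub>F (b, c) in F \<times>\<^sub>F F. \<forall>y\<in>{x}. dist (X b y) (X c y) \<le> e"
  proof eventually_elim
    case (elim p)
    then show ?case
      using dist_triangle_half_l[of "X (fst p) x" l e "X (snd p) x"] by (auto simp: split_beta)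
  qed
qed

lemma uniformly_cauchy_on_imp_uniform_limit:
  fixes X :: "'i \<Rightarrow> 'a \<Rightarrow> 'b::complete_space"
  assumes "F \<noteq> bot" and "uniformly_cauchy_on F K X"
  shows "uniform_limit K X (\<lambda>x. Lim F (\<lambda>i. X i x)) F"
proof -
  have lim: "((\<lambda>i. X i x) \<longlongrightarrow> Lim F (\<lambda>i. X i x)) F" if "x \<in> K" for x
  proof -
    have "cauchy_filter (filtermap (\<lambda>i. X i x) F)"
      unfolding cauchy_filter_metric_filtermap
    proof (intro allI impI)
      fix e :: real assume "0 < e"
      obtain Q where Q: "eventually Q F"
        "\<And>b c y. Q b \<Longrightarrow> Q c \<Longrightarrow> y \<in> K \<Longrightarrow> dist (X b y) (X c y) \<le> e/2"
        using uniformly_cauchy_onE[OF assms(2) half_gt_zero[OF \<open>0 < e\<close>]] by blast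
      have "dist (X b x) (X c x) < e" if "Q b" "Q c" for b c
        using Q(2)[OF that \<open>x \<in> K\<close>] \<open>0 < e\<close> by linarith
      with Q(1) show "\<exists>P. eventually P F \<and> (\<forall>b c. P b \<and> P c \<longrightarrow> dist (X b x) (X c x) < e)"
        by blast
    qed
    moreover have "filtermap (\<lambda>i. X i x) F \<noteq> bot"
      using assms(1) by (simp add: filtermap_bot_iff)
    ultimately obtain l where "filtermap (\<lambda>i. X i x) F \<le> nhds l"
      using cauchy_filter_complete_converges[OF _ complete_UNIV] by auto
    then show ?thesis
      using assms(1) by (simp add: filterlim_def tendsto_Lim)
  qed
  show ?thesis
    unfolding uniform_limit_iff
  proof (intro allI impI)
    fix e :: real assume "0 < e"
    obtain Q where Q: "eventually Q F"
      "\<And>b c x. Q b \<Longrightarrow> Q c \<Longrightarrow> x \<in> K \<Longrightarrow> dist (X b x) (X c x) \<le> e/2"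
      using uniformly_cauchy_onE[OF assms(2) half_gt_zero[OF \<open>0 < e\<close>]] by blast
    show "\<forall>\<^sub>F b in F. \<forall>x\<in>K. dist (X b x) (Lim F (\<lambda>i. X i x)) < e"
      using Q(1)
    proof eventually_elim
      case (elim b)
      have "dist (X b x) (Lim F (\<lambda>i. X i x)) \<le> e/2" if "x \<in> K" for x
      proof (rule tendsto_upperbound)
        show "((\<lambda>c. dist (X b x) (X c x)) \<longlongrightarrow> dist (X b x) (Lim F (\<lambda>i. X i x))) F"
          by (intro tendsto_dist tendsto_const lim that)
        show "\<forall>\<^sub>F c in F. dist (X b x) (X c x) \<le> e/2"
          using Q(1) by eventually_elim (rule Q(2)[OF elim _ that])
      qed (use assms(1) in simp)
      with \<open>0 < e\<close> show ?case by fastforce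
    qed
  qed
qed

lemma uniformly_cauchy_on_compact_from_dense:
  fixes X :: "'i \<Rightarrow> 'a::metric_space \<Rightarrow> 'b::metric_space"
  assumes "compact K" "K \<subseteq> closure U"
    and cauchy: "\<And>u. u \<in> U \<Longrightarrow> uniformly_cauchy_on F {u} X"
    and equicont: "\<And>e. 0 < e \<Longrightarrow>
      \<exists>d>0. \<forall>\<^sub>F i in F. \<forall>x\<in>K. \<forall>u\<in>U. dist x u < d \<longrightarrow> dist (X i x) (X i u) \<le> e"
  shows "uniformly_cauchy_on F K X"
  unfolding uniformly_cauchy_on_def case_prod_unfold
proof (intro allI impI)
  fix e :: real assume "0 < e"
  then obtain d where "0 < d"
    and near: "\<forall>\<^sub>F i in F. \<forall>x\<in>K. \<forall>u\<in>U. dist x u < d \<longrightarrow> dist (X i x) (X i u) \<le> e/3"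
    using equicont[of "e/3"] by auto
  have "K \<subseteq> (\<Union>u\<in>U. ball u d)"
    using assms(2) \<open>0 < d\<close> by (force simp: closure_approachable)
  then obtain T where "T \<subseteq> U" "finite T" and cover: "K \<subseteq> (\<Union>u\<in>T. ball u d)"
    using compactE_image[OF assms(1), of U "\<lambda>u. ball u d"] by auto
  have "\<forall>\<^sub>F p in F \<times>\<^sub>F F. \<forall>u\<in>T. dist (X (fst p) u) (X (snd p) u) \<le> e/3"
  proof (rule eventually_ball_finite[OF \<open>finite T\<close>], rule ballI)
    fix u assume "u \<in> T"
    then show "\<forall>\<^sub>F p in F \<times>\<^sub>F F. dist (X (fst p) u) (X (snd p) u) \<le> e/3"
      using uniformly_cauchy_onD[OF cauchy, of u "e/3"] \<open>T \<subseteq> U\<close> \<open>0 < e\<close> by auto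
  qed
  moreover have "\<forall>\<^sub>F p in F \<times>\<^sub>F F.
      (\<forall>x\<in>K. \<forall>u\<in>U. dist x u < d \<longrightarrow> dist (X (fst p) x) (X (fst p) u) \<le> e/3) \<and>
      (\<forall>x\<in>K. \<forall>u\<in>U. dist x u < d \<longrightarrow> dist (X (snd p) x) (X (snd p) u) \<le> e/3)"
    by (rule eventually_prodI[OF near near])
  ultimately show "\<forall>\<^sub>F p in F \<times>\<^sub>F F. \<forall>x\<in>K. dist (X (fst p) x) (X (snd p) x) \<le> e"
  proof eventually_elim
    case (elim p)
    show ?case
    proof
      fix x assume "x \<in> K"
      then obtain u where "u \<in> T" "dist u x < d" using cover by auto
      then have u: "u \<in> U" "dist x u < d" using \<open>T \<subseteq> U\<close> by (auto simp: dist_commute)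
      have "dist (X (fst p) x) (X (fst p) u) \<le> e/3" "dist (X (snd p) x) (X (snd p) u) \<le> e/3"
        using elim(2) \<open>x \<in> K\<close> u by blast+
      moreover have "dist (X (fst p) u) (X (snd p) u) \<le> e/3"
        using elim(1) \<open>u \<in> T\<close> by blast
      ultimately show "dist (X (fst p) x) (X (snd p) x) \<le> e"
        by metric
    qed
  qed
qed

lemma uniformly_cauchy_on_singleton_transfer:
  fixes X :: "'i \<Rightarrow> 'a \<Rightarrow> 'b::real_normed_vector"
  assumes "uniformly_cauchy_on F {y} (\<lambda>i z. X i z - X i x)"
  shows "uniformly_cauchy_on F {x} X \<longleftrightarrow> uniformly_cauchy_on F {y} X"
proof -
  define D where "D b c = (X b y - X b x) - (X c y - X c x)" for b c
  have "X b y - X c y = D b c + (X b x - X c x)" "X b x - X c x = (X b y - X c y) - D b c" for b c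
    unfolding D_def by (simp_all add: algebra_simps)
  then have tri: "dist (X b y) (X c y) \<le> norm (D b c) + dist (X b x) (X c x)"
    "dist (X b x) (X c x) \<le> norm (D b c) + dist (X b y) (X c y)" for b c
    unfolding dist_norm by (metis add.commute norm_triangle_ineq norm_triangle_ineq4)+
  have step: "uniformly_cauchy_on F {v} X"
    if "uniformly_cauchy_on F {u} X" and tri_uv: "\<And>b c. dist (X b v) (X c v) \<le> norm (D b c) + dist (X b u) (X c u)"
    for u v
    unfolding uniformly_cauchy_on_def case_prod_unfold
  proof (intro allI impI)
    fix e :: real assume "0 < e"
    then have "\<forall>\<^sub>F p in F \<times>\<^sub>F F. norm (D (fst p) (snd p)) \<le> e/2 \<and> dist (X (fst p) u) (X (snd p) u) \<le> e/2"
      using uniformly_cauchy_onD[OF assms, of "e/2"] uniformly_cauchy_onD[OF that(1), of "e/2"]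
      by (auto simp: D_def dist_norm intro: eventually_conj)
    then show "\<forall>\<^sub>F p in F \<times>\<^sub>F F. \<forall>z\<in>{v}. dist (X (fst p) z) (X (snd p) z) \<le> e"
    proof eventually_elim
      case (elim p)
      with tri_uv[of "fst p" "snd p"] show ?case by auto
    qed
  qed
  show ?thesis using step tri by blast
qed

lemma has_vector_derivative_line_shift:
  fixes h :: "'a::real_normed_vector \<Rightarrow> 'b::real_normed_vector"
  assumes "((\<lambda>s. h (y + t *\<^sub>R v + s *\<^sub>R v)) has_vector_derivative D) (at 0)"
  shows "((\<lambda>s. h (y + s *\<^sub>R v)) has_vector_derivative D) (at t)"
proof -
  have "((\<lambda>s. s - t) has_vector_derivative 1) (at t)"
    by (auto intro!: derivative_eq_intros)
  moreover have "((\<lambda>s. h (y + t *\<^sub>R v + s *\<^sub>R v)) has_vector_derivative D) (at ((\<lambda>s. s - t) t))"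
    using assms by simp
  moreover have "(\<lambda>s. h (y + t *\<^sub>R v + s *\<^sub>R v)) \<circ> (\<lambda>s. s - t) = (\<lambda>s. h (y + s *\<^sub>R v))"
    by (simp add: o_def algebra_simps)
  ultimately show ?thesis
    using vector_diff_chain_at by fastforce
qed

lemma norm_linearization_le:
  fixes \<phi> :: "real \<Rightarrow> 'a::real_normed_vector"
  assumes der: "\<And>t. t \<in> closed_segment 0 s \<Longrightarrow> (\<phi> has_vector_derivative \<phi>' t) (at t)"
    and bound: "\<And>t. t \<in> closed_segment 0 s \<Longrightarrow> norm (\<phi>' t - L) \<le> B"
  shows "norm (\<phi> s - \<phi> 0 - s *\<^sub>R L) \<le> \<bar>s\<bar> * B"
proof -
  define \<psi> where "\<psi> = (\<lambda>t. \<phi> t - t *\<^sub>R L)"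
  have "(\<psi> has_derivative (\<lambda>h. h *\<^sub>R (\<phi>' t - L))) (at t within closed_segment 0 s)"
    if "t \<in> closed_segment 0 s" for t
  proof -
    have "((\<lambda>t. t *\<^sub>R L) has_vector_derivative L) (at t)"
      using has_vector_derivative_scaleR[OF DERIV_ident has_vector_derivative_const] by simp
    then have "(\<psi> has_vector_derivative \<phi>' t - L) (at t)"
      unfolding \<psi>_def by (rule has_vector_derivative_diff[OF der[OF that]])
    then show ?thesis
      unfolding has_vector_derivative_def by (rule has_derivative_at_withinI)
  qed
  moreover have "onorm (\<lambda>h. h *\<^sub>R (\<phi>' t - L)) \<le> B" if "t \<in> closed_segment 0 s" for t
    using bound[OF that] onorm_scaleR_left[OF bounded_linear_ident, of "\<phi>' t - L"] onorm_id[where 'a=real]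
    by simp
  ultimately have "norm (\<psi> s - \<psi> 0) \<le> B * norm (s - 0)"
    by (intro differentiable_bound[OF convex_closed_segment]) auto
  then show ?thesis unfolding \<psi>_def by (simp add: algebra_simps)
qed

lemma norm_diff_le_partials_bound:
  fixes h :: "real^'n::finite \<Rightarrow> 'e::real_normed_vector"
  assumes der: "\<And>i z. z \<in> S \<Longrightarrow> ((\<lambda>t. h (z + t *\<^sub>R axis i 1)) has_vector_derivative D i z) (at 0)"
    and bound: "\<And>i z. z \<in> S \<Longrightarrow> norm (D i z) \<le> B"
    and sub: "cball x (dist x y) \<subseteq> S"
  shows "norm (h y - h x) \<le> real CARD('n) * B * dist x y"
proof -
  define corner where "corner A = (\<chi> j. if j \<in> A then y$j else x$j)" for A
  have staircase: "norm (h (corner A) - h x) \<le> B * (\<Sum>i\<in>A. \<bar>y$i - x$i\<bar>)" if "finite A" for A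
    using that
  proof (induction A rule: finite_induct)
    case empty
    have "corner {} = x" unfolding corner_def by (simp add: vec_eq_iff)
    then show ?case by simp
  next
    case (insert a A)
    define s where "s = y$a - x$a"
    define z where "z = corner A"
    have next_corner: "corner (insert a A) = z + s *\<^sub>R axis a 1"
      unfolding z_def corner_def s_def using insert.hyps(2) by (auto simp: vec_eq_iff axis_def)
    have on_edge: "z + t *\<^sub>R axis a 1 \<in> S" if "t \<in> closed_segment 0 s" for t
    proof -
      have "\<bar>t\<bar> \<le> \<bar>s\<bar>" using that by (auto simp: closed_segment_eq_real_ivl split: if_splits)
      then have "norm (z + t *\<^sub>R axis a 1 - x) \<le> norm (y - x)"
        using insert.hyps(2) unfolding z_def corner_def s_def
        by (intro norm_le_componentwise_cart) (auto simp: axis_def)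
      then show ?thesis using sub by (simp add: dist_norm norm_minus_commute subset_iff)
    qed
    have "norm (h (z + s *\<^sub>R axis a 1) - h (z + 0 *\<^sub>R axis a 1) - s *\<^sub>R 0) \<le> \<bar>s\<bar> * B"
    proof (rule norm_linearization_le[where \<phi>' = "\<lambda>t. D a (z + t *\<^sub>R axis a 1)"])
      fix t assume t: "t \<in> closed_segment 0 s"
      show "((\<lambda>t. h (z + t *\<^sub>R axis a 1)) has_vector_derivative D a (z + t *\<^sub>R axis a 1)) (at t)"
        by (rule has_vector_derivative_line_shift) (rule der[OF on_edge[OF t]])
      show "norm (D a (z + t *\<^sub>R axis a 1) - 0) \<le> B" using bound[OF on_edge[OF t]] by simp
    qed
    then have "norm (h (corner (insert a A)) - h z) \<le> \<bar>s\<bar> * B" unfolding next_corner by simp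
    moreover have "norm (h (corner (insert a A)) - h x) \<le> norm (h (corner (insert a A)) - h z) + norm (h z - h x)"
      using norm_triangle_ineq[of "h (corner (insert a A)) - h z" "h z - h x"] by simp
    ultimately show ?case
      using insert.IH insert.hyps unfolding z_def s_def by (simp add: algebra_simps)
  qed
  have "corner UNIV = y" unfolding corner_def by (simp add: vec_eq_iff)
  then have "norm (h y - h x) \<le> B * (\<Sum>i\<in>UNIV. \<bar>y$i - x$i\<bar>)" using staircase[of UNIV] by simp
  also have "\<dots> \<le> B * (\<Sum>i\<in>(UNIV::'n set). dist x y)"
  proof (intro mult_left_mono sum_mono)
    show "\<bar>y$i - x$i\<bar> \<le> dist x y" for i
      using component_le_norm_cart[of "y - x" i] by (simp add: dist_norm norm_minus_commute)
    have "x \<in> S" using sub by auto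
    then show "0 \<le> B" using bound[of x undefined] norm_ge_zero order_trans by blast
  qed
  finally show ?thesis by (simp add: algebra_simps)
qed

lemma holder_modulus_small:
  fixes M \<gamma> e \<delta> :: real
  assumes "0 < \<gamma>" "0 \<le> M" "0 < e" "0 < \<delta>"
  obtains d where "0 < d" "d \<le> \<delta>" "\<And>s. 0 \<le> s \<Longrightarrow> s \<le> d \<Longrightarrow> M * s powr \<gamma> \<le> e"
proof
  define d where "d = min \<delta> ((e / (M + 1)) powr (1/\<gamma>))"
  show "0 < d" "d \<le> \<delta>" unfolding d_def using assms by auto
  fix s :: real assume "0 \<le> s" "s \<le> d"
  then have "s powr \<gamma> \<le> ((e / (M + 1)) powr (1/\<gamma>)) powr \<gamma>"
    unfolding d_def using assms(1) by (intro powr_mono2) auto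
  also have "\<dots> = e / (M + 1)" using assms by (simp add: powr_powr)
  finally have "M * s powr \<gamma> \<le> M * (e / (M + 1))" using assms(2) by (rule mult_left_mono)
  also have "\<dots> \<le> e" using assms(2,3) by (simp add: field_simps)
  finally show "M * s powr \<gamma> \<le> e" .
qed

lemma compact_cball_neighbourhood:
  fixes K :: "'a::{real_normed_vector,heine_borel} set"
  assumes "compact K" "K \<subseteq> \<Omega>" "open \<Omega>"
  obtains \<delta> K' where "0 < \<delta>" "\<delta> \<le> 1" "compact K'" "K' \<subseteq> \<Omega>" "\<And>x. x \<in> K \<Longrightarrow> cball x \<delta> \<subseteq> K'"
proof -
  obtain e where "0 < e" and e: "\<And>x. x \<in> K \<Longrightarrow> \<exists>G\<in>{\<Omega>}. ball x e \<subseteq> G"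
    using Heine_Borel_lemma[OF assms(1), of "{\<Omega>}"] assms(2,3) by auto
  define \<delta> where "\<delta> = min (e/2) 1"
  define K' where "K' = {x + y |x y. x \<in> K \<and> y \<in> cball 0 \<delta>}"
  have \<delta>: "0 < \<delta>" "\<delta> \<le> 1" "\<delta> < e" unfolding \<delta>_def using \<open>0 < e\<close> by auto
  have "compact K'" unfolding K'_def by (rule compact_sums[OF assms(1) compact_cball])
  moreover have cball_K': "cball x \<delta> \<subseteq> K'" if "x \<in> K" for x
  proof
    fix z assume "z \<in> cball x \<delta>"
    then have "z - x \<in> cball 0 \<delta>" by (simp add: dist_norm norm_minus_commute)
    then show "z \<in> K'" unfolding K'_def using that by force
  qed
  moreover have "K' \<subseteq> \<Omega>"
  proof
    fix z assume "z \<in> K'"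
    then obtain x y where "z = x + y" "x \<in> K" "norm y \<le> \<delta>" unfolding K'_def by auto
    then have "z \<in> ball x e" using \<delta>(3) by (simp add: dist_norm)
    then show "z \<in> \<Omega>" using e[OF \<open>x \<in> K\<close>] by blast
  qed
  ultimately show ?thesis using that \<delta>(1,2) by blast
qed

lemma norm_scaleR_diff_le_remainders:
  fixes a b p0 p1 q0 q1 :: "'a::real_normed_vector"
  shows "norm (t *\<^sub>R (a - b))
    \<le> norm (p1 - q1) + norm (p0 - q0) + norm (p1 - p0 - t *\<^sub>R a) + norm (q1 - q0 - t *\<^sub>R b)"
proof -
  have "t *\<^sub>R (a - b) = ((p1 - q1) - (p0 - q0)) + ((q1 - q0 - t *\<^sub>R b) - (p1 - p0 - t *\<^sub>R a))"
    by (simp add: algebra_simps)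
  then have "norm (t *\<^sub>R (a - b))
      \<le> norm ((p1 - q1) - (p0 - q0)) + norm ((q1 - q0 - t *\<^sub>R b) - (p1 - p0 - t *\<^sub>R a))"
    by (metis norm_triangle_ineq)
  also have "\<dots> \<le> (norm (p1 - q1) + norm (p0 - q0)) + (norm (q1 - q0 - t *\<^sub>R b) + norm (p1 - p0 - t *\<^sub>R a))"
    by (intro add_mono norm_triangle_ineq4)
  finally show ?thesis by simp
qed

lemma Ck_on_pdiffs:
  assumes "Ck_on m \<Omega> h" "length \<beta> \<le> m"
  shows "Ck_on (m - length \<beta>) \<Omega> (pdiffs \<beta> h)"
  using assms(2)
proof (induction \<beta>)
  case (Cons i \<beta>)
  then have "Ck_on (Suc (m - length (i # \<beta>))) \<Omega> (pdiffs \<beta> h)"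
    by (simp add: Suc_diff_Suc)
  then show ?case by simp
qed (use assms(1) in simp)

lemma Ck_on_imp_continuous_on: "Ck_on m \<Omega> h \<Longrightarrow> continuous_on \<Omega> h"
  by (cases m) auto

lemma Ck_on_has_pdiff:
  assumes "Ck_on m \<Omega> h" "length \<beta> < m" "x \<in> \<Omega>"
  shows "((\<lambda>t. pdiffs \<beta> h (x + t *\<^sub>R axis i 1)) has_vector_derivative pdiffs (i # \<beta>) h x) (at 0)"
proof -
  have "Ck_on (Suc (m - length \<beta> - 1)) \<Omega> (pdiffs \<beta> h)"
    using Ck_on_pdiffs[OF assms(1), of \<beta>] assms(2) by (simp add: Suc_diff_Suc)
  then have "(\<lambda>t. pdiffs \<beta> h (x + t *\<^sub>R axis i 1)) differentiable (at 0)"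
    using assms(3) by simp
  then show ?thesis unfolding vector_derivative_works by (simp add: pdiff_def)
qed

lemma has_vector_derivative_line_cong:
  fixes x v :: "'a::real_normed_vector"
  assumes "open \<Omega>" "x \<in> \<Omega>" "\<forall>z\<in>\<Omega>. h1 z = h2 z"
  shows "((\<lambda>t. h1 (x + t *\<^sub>R v)) has_vector_derivative D) (at 0) \<longleftrightarrow>
         ((\<lambda>t. h2 (x + t *\<^sub>R v)) has_vector_derivative D) (at 0)"
proof (rule has_vector_derivative_cong_ev)
  have "open ((\<lambda>t. x + t *\<^sub>R v) -` \<Omega>)"
    by (intro open_vimage assms(1) continuous_intros)
  then have "\<forall>\<^sub>F t in nhds 0. t \<in> (\<lambda>t. x + t *\<^sub>R v) -` \<Omega>"
    using assms(2) by (intro eventually_nhds_in_open) auto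
  then show "\<forall>\<^sub>F t in nhds 0. t \<in> UNIV \<longrightarrow> h1 (x + t *\<^sub>R v) = h2 (x + t *\<^sub>R v)"
    by eventually_elim (simp add: assms(3))
qed (use assms(2,3) in simp)

lemma pdiff_cong:
  fixes h1 h2 :: "real^'n::finite \<Rightarrow> 'e::real_normed_vector"
  assumes "open \<Omega>" "x \<in> \<Omega>" "\<forall>z\<in>\<Omega>. h1 z = h2 z"
  shows "pdiff i h1 x = pdiff i h2 x"
  unfolding pdiff_def vector_derivative_def
  using has_vector_derivative_line_cong[OF assms] by simp

lemma Ck_on_cong:
  assumes "open \<Omega>" "\<forall>z\<in>\<Omega>. h1 z = h2 z" "Ck_on m \<Omega> h1"
  shows "Ck_on m \<Omega> h2"
  using assms(2,3)
proof (induction m arbitrary: h1 h2)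
  case 0
  then show ?case using continuous_on_cong by force
next
  case (Suc m)
  have "continuous_on \<Omega> h2" using Suc.prems continuous_on_cong by force
  moreover have "(\<lambda>t. h2 (x + t *\<^sub>R axis i 1)) differentiable (at 0)" if "x \<in> \<Omega>" for i x
  proof -
    have "((\<lambda>t. h1 (x + t *\<^sub>R axis i 1)) has_vector_derivative pdiff i h1 x) (at 0)"
      using Suc.prems(2) that by (simp add: pdiff_def vector_derivative_works[symmetric])
    then show ?thesis
      using has_vector_derivative_line_cong[OF assms(1) that Suc.prems(1)] differentiableI_vector by blast
  qed
  moreover have "Ck_on m \<Omega> (pdiff i h2)" for i
    using Suc.IH[of "pdiff i h1" "pdiff i h2"] Suc.prems pdiff_cong[OF assms(1) _ Suc.prems(1)] by auto
  ultimately show ?case by simp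
qed

lemma holder_bound_imp_local_holder:
  fixes h :: "real^'n::finite \<Rightarrow> 'e::real_normed_vector"
  assumes "Ck_on k \<Omega> h" "holder_bound k \<gamma> K h C" "K \<subseteq> \<Omega>" "cball x \<delta> \<subseteq> K" "\<delta> \<le> 1"
    and "0 < \<gamma>" "\<gamma> \<le> 1" "length \<beta> \<le> k" "dist x y \<le> \<delta>"
  shows "norm (pdiffs \<beta> h y - pdiffs \<beta> h x) \<le> real CARD('n) * C * dist x y powr \<gamma>"
proof -
  have "0 \<le> \<delta>" using assms(9) zero_le_dist[of x y] by linarith
  then have "x \<in> cball x \<delta>" "y \<in> cball x \<delta>" using assms(9) by auto
  then have "x \<in> K" "y \<in> K" using assms(4) by auto
  then have "0 \<le> C" using assms(2) unfolding holder_bound_def by (metis list.size(3) norm_ge_zero order_trans zero_le)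
  have card: "1 \<le> real CARD('n)" by simp
  show ?thesis
  proof (cases "length \<beta> = k")
    case True
    have "norm (pdiffs \<beta> h y - pdiffs \<beta> h x) \<le> C * dist y x powr \<gamma>" if "x \<noteq> y"
      using assms(2) True that \<open>x \<in> K\<close> \<open>y \<in> K\<close> unfolding holder_bound_def by auto
    then have "norm (pdiffs \<beta> h y - pdiffs \<beta> h x) \<le> C * dist x y powr \<gamma>"
      by (cases "x = y") (simp_all add: dist_commute)
    also have "\<dots> \<le> real CARD('n) * C * dist x y powr \<gamma>"
      using mult_right_mono[OF card \<open>0 \<le> C\<close>] by (simp add: mult_right_mono)
    finally show ?thesis .
  next
    case False
    then have "length \<beta> < k" using assms(8) by simp
    txt \<open>Below the top order the bound is Lipschitz, which is stronger since \<open>dist x y \<le> 1\<close>.\<close>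
    have "norm (pdiffs \<beta> h y - pdiffs \<beta> h x) \<le> real CARD('n) * C * dist x y"
    proof (rule norm_diff_le_partials_bound[where S = K])
      fix i z assume "z \<in> K"
      then show "((\<lambda>t. pdiffs \<beta> h (z + t *\<^sub>R axis i 1)) has_vector_derivative pdiffs (i # \<beta>) h z) (at 0)"
        using Ck_on_has_pdiff[OF assms(1) \<open>length \<beta> < k\<close>] assms(3) by blast
      have "length (i # \<beta>) \<le> k" using \<open>length \<beta> < k\<close> by simp
      then show "norm (pdiffs (i # \<beta>) h z) \<le> C"
        using assms(2) \<open>z \<in> K\<close> unfolding holder_bound_def by blast
    next
      show "cball x (dist x y) \<subseteq> K" using assms(4,9) by auto
    qed
    also have "\<dots> \<le> real CARD('n) * C * dist x y powr \<gamma>"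
    proof (intro mult_left_mono)
      show "dist x y \<le> dist x y powr \<gamma>"
        using powr_mono'[of \<gamma> 1 "dist x y"] assms(5,6,7,9) by (cases "x = y") auto
    qed (use \<open>0 \<le> C\<close> in simp)
    finally show ?thesis .
  qed
qed

lemma pdiffs_line_remainder:
  fixes h :: "real^'n::finite \<Rightarrow> 'e::real_normed_vector"
  assumes "Ck_on k \<Omega> h" "length \<beta> < k" "cball x r \<subseteq> \<Omega>" "\<bar>t\<bar> \<le> r" "0 \<le> M" "0 < \<gamma>"
    and holder: "\<And>y. dist x y \<le> r \<Longrightarrow>
      norm (pdiffs (i # \<beta>) h y - pdiffs (i # \<beta>) h x) \<le> M * dist x y powr \<gamma>"
  shows "norm (pdiffs \<beta> h (x + t *\<^sub>R axis i 1) - pdiffs \<beta> h x - t *\<^sub>R pdiffs (i # \<beta>) h x)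
           \<le> \<bar>t\<bar> * (M * \<bar>t\<bar> powr \<gamma>)"
proof -
  have "norm (pdiffs \<beta> h (x + t *\<^sub>R axis i 1) - pdiffs \<beta> h (x + 0 *\<^sub>R axis i 1)
      - t *\<^sub>R pdiffs (i # \<beta>) h x) \<le> \<bar>t\<bar> * (M * \<bar>t\<bar> powr \<gamma>)"
  proof (rule norm_linearization_le[where \<phi>' = "\<lambda>s. pdiffs (i # \<beta>) h (x + s *\<^sub>R axis i 1)"])
    fix s assume "s \<in> closed_segment 0 t"
    then have "\<bar>s\<bar> \<le> \<bar>t\<bar>" by (auto simp: closed_segment_eq_real_ivl split: if_splits)
    moreover have dist_s: "dist x (x + s *\<^sub>R axis i 1) = \<bar>s\<bar>" by (simp add: dist_norm)
    ultimately have on_line: "x + s *\<^sub>R axis i 1 \<in> \<Omega>" using assms(3,4) by (auto simp: subset_iff)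
    show "((\<lambda>s. pdiffs \<beta> h (x + s *\<^sub>R axis i 1)) has_vector_derivative
        pdiffs (i # \<beta>) h (x + s *\<^sub>R axis i 1)) (at s)"
      by (rule has_vector_derivative_line_shift) (rule Ck_on_has_pdiff[OF assms(1,2) on_line])
    have "norm (pdiffs (i # \<beta>) h (x + s *\<^sub>R axis i 1) - pdiffs (i # \<beta>) h x) \<le> M * \<bar>s\<bar> powr \<gamma>"
      using holder[of "x + s *\<^sub>R axis i 1"] \<open>\<bar>s\<bar> \<le> \<bar>t\<bar>\<close> assms(4) dist_s by simp
    also have "\<dots> \<le> M * \<bar>t\<bar> powr \<gamma>"
      using \<open>\<bar>s\<bar> \<le> \<bar>t\<bar>\<close> assms(5,6) by (intro mult_left_mono powr_mono2) auto
    finally show "norm (pdiffs (i # \<beta>) h (x + s *\<^sub>R axis i 1) - pdiffs (i # \<beta>) h x) \<le> M * \<bar>t\<bar> powr \<gamma>" .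
  qed
  then show ?thesis by simp
qed

text \<open>Families indexed along an arbitrary proper filter \<open>F\<close>; nets over a directed set are the
  case \<open>F = net_filter I R\<close>.\<close>

locale holder_bounded_family =
  fixes \<Omega> :: "(real^'n::finite) set" and F :: "'i filter" and I :: "'i set"
    and f :: "'i \<Rightarrow> real^'n \<Rightarrow> 'e::banach" and k :: nat and \<gamma> :: real
  assumes open_domain: "open \<Omega>" and gamma_pos: "0 < \<gamma>" and gamma_le_1: "\<gamma> \<le> 1"
    and proper: "F \<noteq> bot" and eventually_index: "\<forall>\<^sub>F \<iota> in F. \<iota> \<in> I"
    and smooth: "\<And>\<iota>. \<iota> \<in> I \<Longrightarrow> Ck_on k \<Omega> (f \<iota>)"
    and holder_bounded: "\<And>K. compact K \<Longrightarrow> K \<subseteq> \<Omega> \<Longrightarrow> \<exists>C. \<forall>\<iota>\<in>I. holder_bound k \<gamma> K (f \<iota>) C"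
begin

lemma uniform_local_holder:
  assumes "compact K" "K \<subseteq> \<Omega>"
  obtains \<delta> M K' where "0 < \<delta>" "0 \<le> M" "compact K'" "K' \<subseteq> \<Omega>" "\<And>x. x \<in> K \<Longrightarrow> cball x \<delta> \<subseteq> K'"
    "\<And>\<iota> (\<beta> :: 'n list) x y. \<iota> \<in> I \<Longrightarrow> length \<beta> \<le> k \<Longrightarrow> x \<in> K \<Longrightarrow> dist x y \<le> \<delta> \<Longrightarrow>
       norm (pdiffs \<beta> (f \<iota>) y - pdiffs \<beta> (f \<iota>) x) \<le> M * dist x y powr \<gamma>"
proof -
  obtain \<delta> K' where \<delta>: "0 < \<delta>" "\<delta> \<le> 1" "compact K'" "K' \<subseteq> \<Omega>" "\<And>x. x \<in> K \<Longrightarrow> cball x \<delta> \<subseteq> K'"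
    using compact_cball_neighbourhood[OF assms open_domain] by blast
  obtain C where C: "\<forall>\<iota>\<in>I. holder_bound k \<gamma> K' (f \<iota>) C" using holder_bounded \<delta>(3,4) by blast
  define M where "M = real CARD('n) * max C 0"
  show ?thesis
  proof (rule that[OF \<delta>(1) _ \<delta>(3,4,5)])
    show "0 \<le> M" unfolding M_def by simp
    fix \<iota> and \<beta> :: "'n list" and x y assume "\<iota> \<in> I" "length \<beta> \<le> k" "x \<in> K" "dist x y \<le> \<delta>"
    then have "norm (pdiffs \<beta> (f \<iota>) y - pdiffs \<beta> (f \<iota>) x) \<le> real CARD('n) * C * dist x y powr \<gamma>"
      using \<delta>(2,4,5) C gamma_pos gamma_le_1
      by (intro holder_bound_imp_local_holder[OF smooth]) auto
    also have "\<dots> \<le> M * dist x y powr \<gamma>"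
      unfolding M_def by (intro mult_right_mono) auto
    finally show "norm (pdiffs \<beta> (f \<iota>) y - pdiffs \<beta> (f \<iota>) x) \<le> M * dist x y powr \<gamma>" .
  qed
qed

lemma uniformly_cauchy_on_pdiffs_Cons:
  assumes "length (i # \<beta>) \<le> k"
    and cauchy: "\<And>K. compact K \<Longrightarrow> K \<subseteq> \<Omega> \<Longrightarrow> uniformly_cauchy_on F K (\<lambda>\<iota>. pdiffs \<beta> (f \<iota>))"
    and "compact K" "K \<subseteq> \<Omega>"
  shows "uniformly_cauchy_on F K (\<lambda>\<iota>. pdiffs (i # \<beta>) (f \<iota>))"
  unfolding uniformly_cauchy_on_def case_prod_unfold
proof (intro allI impI)
  fix e :: real assume "0 < e"
  obtain \<delta> M K' where \<delta>: "0 < \<delta>" "0 \<le> M" "compact K'" "K' \<subseteq> \<Omega>" "\<And>x. x \<in> K \<Longrightarrow> cball x \<delta> \<subseteq> K'"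
    and holder: "\<And>\<iota> (\<beta> :: 'n list) x y. \<iota> \<in> I \<Longrightarrow> length \<beta> \<le> k \<Longrightarrow> x \<in> K \<Longrightarrow> dist x y \<le> \<delta> \<Longrightarrow>
       norm (pdiffs \<beta> (f \<iota>) y - pdiffs \<beta> (f \<iota>) x) \<le> M * dist x y powr \<gamma>"
    using uniform_local_holder[OF assms(3,4)] by blast
  have "0 < e/4" using \<open>0 < e\<close> by simp
  obtain t where t: "0 < t" "t \<le> \<delta>" and small: "\<And>s. 0 \<le> s \<Longrightarrow> s \<le> t \<Longrightarrow> M * s powr \<gamma> \<le> e/4"
    using holder_modulus_small[OF gamma_pos \<delta>(2) \<open>0 < e/4\<close> \<delta>(1)] by blast
  have "length \<beta> < k" using assms(1) by simp
  have remainder: "norm (pdiffs \<beta> (f \<iota>) (x + t *\<^sub>R axis i 1) - pdiffs \<beta> (f \<iota>) x - t *\<^sub>R pdiffs (i # \<beta>) (f \<iota>) x)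
      \<le> t * (e/4)" if "\<iota> \<in> I" "x \<in> K" for \<iota> x
  proof -
    have "norm (pdiffs \<beta> (f \<iota>) (x + t *\<^sub>R axis i 1) - pdiffs \<beta> (f \<iota>) x - t *\<^sub>R pdiffs (i # \<beta>) (f \<iota>) x)
        \<le> \<bar>t\<bar> * (M * \<bar>t\<bar> powr \<gamma>)"
      using \<delta>(4,5) t that holder[OF that(1) assms(1) that(2)]
      by (intro pdiffs_line_remainder[OF smooth[OF that(1)] \<open>length \<beta> < k\<close> _ _ \<delta>(2) gamma_pos]) auto
    also have "\<dots> \<le> t * (e/4)" using small[of t] t by (simp add: mult_left_mono)
    finally show ?thesis .
  qed
  have "\<forall>\<^sub>F p in F \<times>\<^sub>F F. \<forall>z\<in>K'. dist (pdiffs \<beta> (f (fst p)) z) (pdiffs \<beta> (f (snd p)) z) \<le> t * (e/4)"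
    using \<open>0 < e\<close> t(1) by (intro uniformly_cauchy_onD[OF cauchy[OF \<delta>(3,4)]]) simp
  moreover have "\<forall>\<^sub>F p in F \<times>\<^sub>F F. fst p \<in> I \<and> snd p \<in> I"
    by (rule eventually_prodI[OF eventually_index eventually_index])
  ultimately show "\<forall>\<^sub>F p in F \<times>\<^sub>F F. \<forall>x\<in>K. dist (pdiffs (i # \<beta>) (f (fst p)) x) (pdiffs (i # \<beta>) (f (snd p)) x) \<le> e"
  proof eventually_elim
    case (elim p)
    show ?case
    proof
      fix x assume "x \<in> K"
      let ?a = "\<lambda>\<iota>. pdiffs (i # \<beta>) (f \<iota>) x"
        and ?P0 = "\<lambda>\<iota>. pdiffs \<beta> (f \<iota>) x" and ?P1 = "\<lambda>\<iota>. pdiffs \<beta> (f \<iota>) (x + t *\<^sub>R axis i 1)"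
      have "x \<in> K'" "x + t *\<^sub>R axis i 1 \<in> K'"
        using \<delta>(5)[OF \<open>x \<in> K\<close>] t by (auto simp: dist_norm)
      then have "norm (?P1 (fst p) - ?P1 (snd p)) \<le> t * (e/4)" "norm (?P0 (fst p) - ?P0 (snd p)) \<le> t * (e/4)"
        using elim by (simp_all add: dist_norm del: pdiffs.simps)
      moreover have "norm (?P1 (fst p) - ?P0 (fst p) - t *\<^sub>R ?a (fst p)) \<le> t * (e/4)"
        "norm (?P1 (snd p) - ?P0 (snd p) - t *\<^sub>R ?a (snd p)) \<le> t * (e/4)"
        using remainder \<open>x \<in> K\<close> elim by blast+
      ultimately have "norm (t *\<^sub>R (?a (fst p) - ?a (snd p))) \<le> t * e"
        using norm_scaleR_diff_le_remainders[of t "?a (fst p)" "?a (snd p)" "?P1 (fst p)" "?P1 (snd p)"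
            "?P0 (fst p)" "?P0 (snd p)"] by linarith
      then show "dist (pdiffs (i # \<beta>) (f (fst p)) x) (pdiffs (i # \<beta>) (f (snd p)) x) \<le> e"
        using t(1) by (simp add: dist_norm del: pdiffs.simps)
    qed
  qed
qed

lemma uniformly_cauchy_on_pdiffs_dense:
  assumes "length \<beta> \<le> k" "compact K" "K \<subseteq> \<Omega>" "K \<subseteq> closure U"
    and cauchy: "\<And>u. u \<in> U \<Longrightarrow> uniformly_cauchy_on F {u} (\<lambda>\<iota>. pdiffs \<beta> (f \<iota>))"
  shows "uniformly_cauchy_on F K (\<lambda>\<iota>. pdiffs \<beta> (f \<iota>))"
proof (rule uniformly_cauchy_on_compact_from_dense[OF assms(2,4) cauchy])
  fix e :: real assume "0 < e"
  obtain \<delta> M where "0 < \<delta>" "0 \<le> M"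
    and holder: "\<And>\<iota> (\<beta> :: 'n list) x y. \<iota> \<in> I \<Longrightarrow> length \<beta> \<le> k \<Longrightarrow> x \<in> K \<Longrightarrow> dist x y \<le> \<delta> \<Longrightarrow>
       norm (pdiffs \<beta> (f \<iota>) y - pdiffs \<beta> (f \<iota>) x) \<le> M * dist x y powr \<gamma>"
    using uniform_local_holder[OF assms(2,3)] by metis
  obtain d where "0 < d" "d \<le> \<delta>" and small: "\<And>s. 0 \<le> s \<Longrightarrow> s \<le> d \<Longrightarrow> M * s powr \<gamma> \<le> e"
    using holder_modulus_small[OF gamma_pos \<open>0 \<le> M\<close> \<open>0 < e\<close> \<open>0 < \<delta>\<close>] by blast
  have "\<forall>\<^sub>F \<iota> in F. \<forall>x\<in>K. \<forall>u\<in>U. dist x u < d \<longrightarrow>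
      dist (pdiffs \<beta> (f \<iota>) x) (pdiffs \<beta> (f \<iota>) u) \<le> e"
    using eventually_index
  proof eventually_elim
    case (elim \<iota>)
    show ?case
    proof (intro ballI impI)
      fix x u assume "x \<in> K" "u \<in> U" "dist x u < d"
      then have "norm (pdiffs \<beta> (f \<iota>) u - pdiffs \<beta> (f \<iota>) x) \<le> M * dist x u powr \<gamma>"
        using holder[OF elim assms(1)] \<open>d \<le> \<delta>\<close> by simp
      also have "\<dots> \<le> e" using small \<open>dist x u < d\<close> by simp
      finally show "dist (pdiffs \<beta> (f \<iota>) x) (pdiffs \<beta> (f \<iota>) u) \<le> e"
        by (simp add: dist_norm norm_minus_commute)
    qed
  qed
  with \<open>0 < d\<close> show "\<exists>d>0. \<forall>\<^sub>F \<iota> in F. \<forall>x\<in>K. \<forall>u\<in>U. dist x u < d \<longrightarrow>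
      dist (pdiffs \<beta> (f \<iota>) x) (pdiffs \<beta> (f \<iota>) u) \<le> e"
    by blast
qed

lemma uniformly_cauchy_on_increment:
  assumes "1 \<le> k" "cball x r \<subseteq> \<Omega>" "y \<in> cball x r"
    and partials: "\<And>n. uniformly_cauchy_on F (cball x r) (\<lambda>\<iota>. pdiffs [n] (f \<iota>))"
  shows "uniformly_cauchy_on F {y} (\<lambda>\<iota> z. f \<iota> z - f \<iota> x)"
  unfolding uniformly_cauchy_on_def case_prod_unfold
proof (intro allI impI)
  fix e :: real assume "0 < e"
  have "0 \<le> r" using assms(3) zero_le_dist[of x y] by (simp del: zero_le_dist)
  define \<epsilon> where "\<epsilon> = e / (real CARD('n) * r + 1)"
  have "0 < real CARD('n) * r + 1" using \<open>0 \<le> r\<close> by (simp add: add_nonneg_pos)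
  then have "0 < \<epsilon>" and \<epsilon>: "\<epsilon> * (real CARD('n) * r + 1) = e"
    unfolding \<epsilon>_def using \<open>0 < e\<close> by simp_all
  have "\<forall>\<^sub>F p in F \<times>\<^sub>F F. \<forall>n. \<forall>z\<in>cball x r. dist (pdiffs [n] (f (fst p)) z) (pdiffs [n] (f (snd p)) z) \<le> \<epsilon>"
    by (intro eventually_all_finite uniformly_cauchy_onD[OF partials \<open>0 < \<epsilon>\<close>])
  moreover have "\<forall>\<^sub>F p in F \<times>\<^sub>F F. fst p \<in> I \<and> snd p \<in> I"
    by (rule eventually_prodI[OF eventually_index eventually_index])
  ultimately show "\<forall>\<^sub>F p in F \<times>\<^sub>F F. \<forall>z\<in>{y}.
      dist (f (fst p) z - f (fst p) x) (f (snd p) z - f (snd p) x) \<le> e"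
  proof eventually_elim
    case (elim p)
    have "norm ((f (fst p) y - f (snd p) y) - (f (fst p) x - f (snd p) x))
        \<le> real CARD('n) * \<epsilon> * dist x y"
    proof (rule norm_diff_le_partials_bound[where S = "cball x r" and h = "\<lambda>z. f (fst p) z - f (snd p) z"])
      fix n z assume "z \<in> cball x r"
      then have "z \<in> \<Omega>" using assms(2) by blast
      have "Ck_on k \<Omega> (f (fst p))" "Ck_on k \<Omega> (f (snd p))" using smooth elim by blast+
      from this[THEN Ck_on_has_pdiff, of "[]" z n] assms(1) \<open>z \<in> \<Omega>\<close>
      show "((\<lambda>t. f (fst p) (z + t *\<^sub>R axis n 1) - f (snd p) (z + t *\<^sub>R axis n 1))
          has_vector_derivative pdiffs [n] (f (fst p)) z - pdiffs [n] (f (snd p)) z) (at 0)"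
        by (auto intro: has_vector_derivative_diff)
      show "norm (pdiffs [n] (f (fst p)) z - pdiffs [n] (f (snd p)) z) \<le> \<epsilon>"
        using elim \<open>z \<in> cball x r\<close> by (simp add: dist_norm del: pdiffs.simps)
    next
      show "cball x (dist x y) \<subseteq> cball x r" using assms(3) by auto
    qed
    also have "\<dots> \<le> \<epsilon> * (real CARD('n) * r + 1)"
    proof -
      have "dist x y \<le> r" using assms(3) by simp
      then have "real CARD('n) * dist x y \<le> real CARD('n) * r" by (rule mult_left_mono) simp
      then have "real CARD('n) * dist x y \<le> real CARD('n) * r + 1" by linarith
      from mult_left_mono[OF this, of \<epsilon>] \<open>0 < \<epsilon>\<close> show ?thesis by (simp add: ac_simps)
    qed
    finally show ?case using \<epsilon> by (simp add: dist_norm algebra_simps)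
  qed
qed

lemma uniformly_cauchy_on_singleton_connected:
  assumes "1 \<le> k" "connected \<Omega>"
    and partials: "\<And>n K. compact K \<Longrightarrow> K \<subseteq> \<Omega> \<Longrightarrow> uniformly_cauchy_on F K (\<lambda>\<iota>. pdiffs [n] (f \<iota>))"
    and "x0 \<in> \<Omega>" "uniformly_cauchy_on F {x0} f" "x \<in> \<Omega>"
  shows "uniformly_cauchy_on F {x} f"
proof (rule connected_induction_simple[OF assms(2,4,6), where P = "\<lambda>x. uniformly_cauchy_on F {x} f"])
  fix a assume "a \<in> \<Omega>"
  then obtain r where "0 < r" "cball a r \<subseteq> \<Omega>" using open_domain open_contains_cball by blast
  have equiv: "uniformly_cauchy_on F {a} f \<longleftrightarrow> uniformly_cauchy_on F {y} f" if "y \<in> ball a r" for y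
    using that \<open>cball a r \<subseteq> \<Omega>\<close>
    by (intro uniformly_cauchy_on_singleton_transfer uniformly_cauchy_on_increment[OF assms(1)] partials) auto
  moreover have "openin (top_of_set \<Omega>) (ball a r)"
    using \<open>cball a r \<subseteq> \<Omega>\<close> by (intro open_subset) auto
  moreover have "\<forall>x\<in>ball a r. \<forall>y\<in>ball a r. uniformly_cauchy_on F {x} f \<longrightarrow> uniformly_cauchy_on F {y} f"
    using equiv by blast
  ultimately show "\<exists>T. openin (top_of_set \<Omega>) T \<and> a \<in> T \<and>
      (\<forall>x\<in>T. \<forall>y\<in>T. uniformly_cauchy_on F {x} f \<longrightarrow> uniformly_cauchy_on F {y} f)"
    using \<open>0 < r\<close> by (intro exI[of _ "ball a r"]) simp
qed (use assms(5) in simp)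

lemma uniformly_cauchy_on_pdiffs:
  assumes cauchy_values: "\<And>K. compact K \<Longrightarrow> K \<subseteq> \<Omega> \<Longrightarrow> uniformly_cauchy_on F K f"
    and "length \<beta> \<le> k" "compact K" "K \<subseteq> \<Omega>"
  shows "uniformly_cauchy_on F K (\<lambda>\<iota>. pdiffs \<beta> (f \<iota>))"
  using assms(2-4)
proof (induction \<beta> arbitrary: K)
  case (Cons i \<beta>)
  then show ?case by (intro uniformly_cauchy_on_pdiffs_Cons) auto
qed (use cauchy_values in simp)

lemma uniformly_cauchy_on_from_dense_values:
  assumes "\<Omega> \<subseteq> closure U" "\<forall>x\<in>U. \<exists>l. ((\<lambda>\<iota>. f \<iota> x) \<longlongrightarrow> l) F" "compact K" "K \<subseteq> \<Omega>"
  shows "uniformly_cauchy_on F K f"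
  using uniformly_cauchy_on_pdiffs_dense[of "[]" K U] assms tendsto_imp_uniformly_cauchy_on_singleton
  by fastforce

lemma uniformly_cauchy_on_from_dense_partials:
  assumes "1 \<le> k" "connected \<Omega>" "\<Omega> \<subseteq> closure U"
    and "\<forall>n. \<forall>x\<in>U. \<exists>l. ((\<lambda>\<iota>. pdiff n (f \<iota>) x) \<longlongrightarrow> l) F"
    and "x0 \<in> \<Omega>" "((\<lambda>\<iota>. f \<iota> x0) \<longlongrightarrow> l0) F" "compact K" "K \<subseteq> \<Omega>"
  shows "uniformly_cauchy_on F K f"
proof -
  have partials: "uniformly_cauchy_on F K' (\<lambda>\<iota>. pdiffs [n] (f \<iota>))" if "compact K'" "K' \<subseteq> \<Omega>" for n K'
    using uniformly_cauchy_on_pdiffs_dense[of "[n]" K' U] assms(1,3,4) that tendsto_imp_uniformly_cauchy_on_singleton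
    by fastforce
  have "uniformly_cauchy_on F {x} f" if "x \<in> \<Omega>" for x
    using uniformly_cauchy_on_singleton_connected[OF assms(1,2) partials assms(5) _ that]
      tendsto_imp_uniformly_cauchy_on_singleton[of f x0 l0 F, OF assms(6)] by blast
  then show ?thesis
    using uniformly_cauchy_on_pdiffs_dense[of "[]" K \<Omega>] assms(7,8) closure_subset by fastforce
qed

end

locale holder_cauchy_family = holder_bounded_family \<Omega> F I f k \<gamma>
  for \<Omega> :: "(real^'n::finite) set" and F :: "'i filter" and I :: "'i set"
    and f :: "'i \<Rightarrow> real^'n \<Rightarrow> 'e::banach" and k :: nat and \<gamma> :: real +
  assumes cauchy_values: "\<And>K. compact K \<Longrightarrow> K \<subseteq> \<Omega> \<Longrightarrow> uniformly_cauchy_on F K f"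
begin

definition pdiffs_limit :: "'n list \<Rightarrow> real^'n \<Rightarrow> 'e" where
  "pdiffs_limit \<beta> x = Lim F (\<lambda>\<iota>. pdiffs \<beta> (f \<iota>) x)"

lemma uniform_limit_pdiffs:
  assumes "length \<beta> \<le> k" "compact K" "K \<subseteq> \<Omega>"
  shows "uniform_limit K (\<lambda>\<iota>. pdiffs \<beta> (f \<iota>)) (pdiffs_limit \<beta>) F"
  unfolding pdiffs_limit_def[abs_def]
  by (rule uniformly_cauchy_on_imp_uniform_limit[OF proper uniformly_cauchy_on_pdiffs[OF cauchy_values assms]])

lemma tendsto_pdiffs_limit:
  assumes "length \<beta> \<le> k" "x \<in> \<Omega>"
  shows "((\<lambda>\<iota>. pdiffs \<beta> (f \<iota>) x) \<longlongrightarrow> pdiffs_limit \<beta> x) F"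
  using assms by (intro tendsto_uniform_limitI[OF uniform_limit_pdiffs, of \<beta> "{x}"]) auto

lemma norm_limit_le:
  assumes "(X \<longlongrightarrow> l) F" "\<And>\<iota>. \<iota> \<in> I \<Longrightarrow> norm (X \<iota>) \<le> C"
  shows "norm l \<le> C"
  using tendsto_norm[OF assms(1)] eventually_mono[OF eventually_index assms(2)] proper
  by (rule tendsto_upperbound) simp

lemma continuous_on_pdiffs_limit:
  assumes "length \<beta> \<le> k"
  shows "continuous_on \<Omega> (pdiffs_limit \<beta>)"
proof (rule continuous_at_imp_continuous_on, rule ballI)
  fix x assume "x \<in> \<Omega>"
  then obtain r where "0 < r" "cball x r \<subseteq> \<Omega>" using open_domain open_contains_cball by blast
  have "\<forall>\<^sub>F \<iota> in F. continuous_on (cball x r) (pdiffs \<beta> (f \<iota>))"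
    using eventually_index
  proof eventually_elim
    case (elim \<iota>)
    with assms \<open>cball x r \<subseteq> \<Omega>\<close> show ?case
      by (meson Ck_on_imp_continuous_on Ck_on_pdiffs continuous_on_subset smooth)
  qed
  then have "continuous_on (cball x r) (pdiffs_limit \<beta>)"
    using uniform_limit_theorem[OF _ uniform_limit_pdiffs[OF assms compact_cball \<open>cball x r \<subseteq> \<Omega>\<close>]] proper
    by simp
  then show "isCont (pdiffs_limit \<beta>) x"
    using \<open>0 < r\<close> by (intro continuous_on_interior[of "cball x r"]) auto
qed

lemma has_pdiff_pdiffs_limit:
  assumes "length (i # \<beta>) \<le> k" "x \<in> \<Omega>"
  shows "((\<lambda>t. pdiffs_limit \<beta> (x + t *\<^sub>R axis i 1)) has_vector_derivative pdiffs_limit (i # \<beta>) x) (at 0)"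
proof -
  have "{x} \<subseteq> \<Omega>" using assms(2) by simp
  obtain \<delta> M K' where \<delta>: "0 < \<delta>" "0 \<le> M" "compact K'" "K' \<subseteq> \<Omega>" "\<And>z. z \<in> {x} \<Longrightarrow> cball z \<delta> \<subseteq> K'"
    and holder: "\<And>\<iota> (\<beta> :: 'n list) z y. \<iota> \<in> I \<Longrightarrow> length \<beta> \<le> k \<Longrightarrow> z \<in> {x} \<Longrightarrow> dist z y \<le> \<delta> \<Longrightarrow>
       norm (pdiffs \<beta> (f \<iota>) y - pdiffs \<beta> (f \<iota>) z) \<le> M * dist z y powr \<gamma>"
    using uniform_local_holder[OF compact_sing \<open>{x} \<subseteq> \<Omega>\<close>] by blast
  have ball_x: "cball x \<delta> \<subseteq> \<Omega>" using \<delta>(4,5) by blast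
  have "length \<beta> < k" using assms(1) by simp
  have remainder: "norm (pdiffs_limit \<beta> (x + t *\<^sub>R axis i 1) - pdiffs_limit \<beta> x - t *\<^sub>R pdiffs_limit (i # \<beta>) x)
      \<le> \<bar>t\<bar> * (M * \<bar>t\<bar> powr \<gamma>)" if "\<bar>t\<bar> \<le> \<delta>" for t
  proof (rule norm_limit_le)
    have "x + t *\<^sub>R axis i 1 \<in> \<Omega>" using ball_x that by (auto simp: dist_norm)
    then show "((\<lambda>\<iota>. pdiffs \<beta> (f \<iota>) (x + t *\<^sub>R axis i 1) - pdiffs \<beta> (f \<iota>) x - t *\<^sub>R pdiffs (i # \<beta>) (f \<iota>) x)
        \<longlongrightarrow> pdiffs_limit \<beta> (x + t *\<^sub>R axis i 1) - pdiffs_limit \<beta> x - t *\<^sub>R pdiffs_limit (i # \<beta>) x) F"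
      using assms by (intro tendsto_diff tendsto_scaleR tendsto_const tendsto_pdiffs_limit) auto
    fix \<iota> assume "\<iota> \<in> I"
    show "norm (pdiffs \<beta> (f \<iota>) (x + t *\<^sub>R axis i 1) - pdiffs \<beta> (f \<iota>) x - t *\<^sub>R pdiffs (i # \<beta>) (f \<iota>) x)
        \<le> \<bar>t\<bar> * (M * \<bar>t\<bar> powr \<gamma>)"
      by (rule pdiffs_line_remainder[OF smooth[OF \<open>\<iota> \<in> I\<close>] \<open>length \<beta> < k\<close> ball_x that \<delta>(2) gamma_pos
            holder[OF \<open>\<iota> \<in> I\<close> assms(1) singletonI]])
  qed
  show ?thesis
    unfolding has_vector_derivative_def has_derivative_at_alt
  proof (intro conjI allI impI)
    show "bounded_linear (\<lambda>h. h *\<^sub>R pdiffs_limit (i # \<beta>) x)" by (rule bounded_linear_scaleR_left)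
    fix e :: real assume "0 < e"
    obtain d where "0 < d" "d \<le> \<delta>" and small: "\<And>s. 0 \<le> s \<Longrightarrow> s \<le> d \<Longrightarrow> M * s powr \<gamma> \<le> e"
      using holder_modulus_small[OF gamma_pos \<delta>(2) \<open>0 < e\<close> \<delta>(1)] by blast
    have "norm (pdiffs_limit \<beta> (x + t *\<^sub>R axis i 1) - pdiffs_limit \<beta> (x + 0 *\<^sub>R axis i 1)
        - (t - 0) *\<^sub>R pdiffs_limit (i # \<beta>) x) \<le> e * norm (t - 0)" if "norm (t - 0) < d" for t
    proof -
      have "\<bar>t\<bar> * (M * \<bar>t\<bar> powr \<gamma>) \<le> \<bar>t\<bar> * e"
        using small[of "\<bar>t\<bar>"] that by (simp add: mult_left_mono)
      then show ?thesis using remainder[of t] that \<open>d \<le> \<delta>\<close> by (simp add: mult.commute)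
    qed
    with \<open>0 < d\<close> show "\<exists>d>0. \<forall>t. norm (t - 0) < d \<longrightarrow>
        norm (pdiffs_limit \<beta> (x + t *\<^sub>R axis i 1) - pdiffs_limit \<beta> (x + 0 *\<^sub>R axis i 1)
          - (t - 0) *\<^sub>R pdiffs_limit (i # \<beta>) x) \<le> e * norm (t - 0)"
      by blast
  qed
qed

lemma pdiff_pdiffs_limit:
  "length (i # \<beta>) \<le> k \<Longrightarrow> x \<in> \<Omega> \<Longrightarrow> pdiff i (pdiffs_limit \<beta>) x = pdiffs_limit (i # \<beta>) x"
  unfolding pdiff_def by (rule vector_derivative_at[OF has_pdiff_pdiffs_limit])

lemma pdiffs_pdiffs_limit:
  "length \<beta> \<le> k \<Longrightarrow> x \<in> \<Omega> \<Longrightarrow> pdiffs \<beta> (pdiffs_limit []) x = pdiffs_limit \<beta> x"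
proof (induction \<beta> arbitrary: x)
  case (Cons i \<beta>)
  then have "pdiff i (pdiffs \<beta> (pdiffs_limit [])) x = pdiff i (pdiffs_limit \<beta>) x"
    by (intro pdiff_cong[OF open_domain]) auto
  with Cons.prems show ?case by (simp add: pdiff_pdiffs_limit)
qed simp

lemma Ck_on_pdiffs_limit: "length \<beta> + m = k \<Longrightarrow> Ck_on m \<Omega> (pdiffs_limit \<beta>)"
proof (induction m arbitrary: \<beta>)
  case 0
  then show ?case using continuous_on_pdiffs_limit by simp
next
  case (Suc m)
  have "Ck_on m \<Omega> (pdiff i (pdiffs_limit \<beta>))" for i
  proof (rule Ck_on_cong[OF open_domain _ Suc.IH])
    show "length (i # \<beta>) + m = k" using Suc.prems by simp
    show "\<forall>z\<in>\<Omega>. pdiffs_limit (i # \<beta>) z = pdiff i (pdiffs_limit \<beta>) z"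
      using Suc.prems by (simp add: pdiff_pdiffs_limit)
  qed
  moreover have "(\<lambda>t. pdiffs_limit \<beta> (x + t *\<^sub>R axis i 1)) differentiable (at 0)" if "x \<in> \<Omega>" for i x
    by (rule differentiableI_vector[OF has_pdiff_pdiffs_limit]) (use Suc.prems that in simp_all)
  moreover have "continuous_on \<Omega> (pdiffs_limit \<beta>)"
    using Suc.prems by (intro continuous_on_pdiffs_limit) simp
  ultimately show ?case by simp
qed

lemma holder_bound_pdiffs_limit:
  assumes "K \<subseteq> \<Omega>" and bound: "\<forall>\<iota>\<in>I. holder_bound k \<gamma> K (f \<iota>) C"
  shows "holder_bound k \<gamma> K (pdiffs_limit []) C"
  unfolding holder_bound_def
proof (intro conjI allI impI)
  fix \<beta> :: "'n list" and x assume len: "length \<beta> \<le> k" and "x \<in> K"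
  then have "x \<in> \<Omega>" using assms(1) by blast
  have "norm (pdiffs_limit \<beta> x) \<le> C"
  proof (rule norm_limit_le[OF tendsto_pdiffs_limit[OF len \<open>x \<in> \<Omega>\<close>]])
    fix \<iota> assume "\<iota> \<in> I"
    then show "norm (pdiffs \<beta> (f \<iota>) x) \<le> C"
      using bound len \<open>x \<in> K\<close> unfolding holder_bound_def by blast
  qed
  then show "norm (pdiffs \<beta> (pdiffs_limit []) x) \<le> C"
    using pdiffs_pdiffs_limit[OF len \<open>x \<in> \<Omega>\<close>] by simp
next
  fix \<beta> :: "'n list" and x y assume len: "length \<beta> = k" and "x \<in> K" "y \<in> K" "x \<noteq> y"
  then have "x \<in> \<Omega>" "y \<in> \<Omega>" "length \<beta> \<le> k" using assms(1) by auto
  have "norm (pdiffs_limit \<beta> x - pdiffs_limit \<beta> y) \<le> C * dist x y powr \<gamma>"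
  proof (rule norm_limit_le[OF tendsto_diff[OF tendsto_pdiffs_limit tendsto_pdiffs_limit]])
    fix \<iota> assume "\<iota> \<in> I"
    then show "norm (pdiffs \<beta> (f \<iota>) x - pdiffs \<beta> (f \<iota>) y) \<le> C * dist x y powr \<gamma>"
      using bound len \<open>x \<in> K\<close> \<open>y \<in> K\<close> \<open>x \<noteq> y\<close> unfolding holder_bound_def by blast
  qed (use \<open>x \<in> \<Omega>\<close> \<open>y \<in> \<Omega>\<close> \<open>length \<beta> \<le> k\<close> in auto)
  then show "norm (pdiffs \<beta> (pdiffs_limit []) x - pdiffs \<beta> (pdiffs_limit []) y) \<le> C * dist x y powr \<gamma>"
    using pdiffs_pdiffs_limit \<open>x \<in> \<Omega>\<close> \<open>y \<in> \<Omega>\<close> \<open>length \<beta> \<le> k\<close> by simp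
qed

lemma limit_in_Ck_gamma_loc:
  "Ck_gamma_loc k \<gamma> \<Omega> (pdiffs_limit []) \<and>
    (\<forall>K \<beta>. compact K \<longrightarrow> K \<subseteq> \<Omega> \<longrightarrow> length \<beta> \<le> k \<longrightarrow>
       uniform_limit K (\<lambda>\<iota>. pdiffs \<beta> (f \<iota>)) (pdiffs \<beta> (pdiffs_limit [])) F)"
proof (intro conjI allI impI)
  have "\<exists>C. holder_bound k \<gamma> K (pdiffs_limit []) C" if "compact K" "K \<subseteq> \<Omega>" for K
    using holder_bounded[OF that] holder_bound_pdiffs_limit[OF that(2)] by blast
  moreover have "Ck_on k \<Omega> (pdiffs_limit [])" by (rule Ck_on_pdiffs_limit) simp
  ultimately show "Ck_gamma_loc k \<gamma> \<Omega> (pdiffs_limit [])"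
    unfolding Ck_gamma_loc_def by blast
  fix K :: "(real^'n) set" and \<beta> :: "'n list" assume "compact K" "K \<subseteq> \<Omega>" "length \<beta> \<le> k"
  then have "uniform_limit K (\<lambda>\<iota>. pdiffs \<beta> (f \<iota>)) (pdiffs_limit \<beta>) F"
    by (intro uniform_limit_pdiffs)
  moreover have "pdiffs_limit \<beta> x = pdiffs \<beta> (pdiffs_limit []) x" if "x \<in> K" for x
    using pdiffs_pdiffs_limit \<open>K \<subseteq> \<Omega>\<close> \<open>length \<beta> \<le> k\<close> that by auto
  ultimately show "uniform_limit K (\<lambda>\<iota>. pdiffs \<beta> (f \<iota>)) (pdiffs \<beta> (pdiffs_limit [])) F"
    using uniform_limit_cong'[of K "\<lambda>\<iota>. pdiffs \<beta> (f \<iota>)" "\<lambda>\<iota>. pdiffs \<beta> (f \<iota>)"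
        "pdiffs_limit \<beta>" "pdiffs \<beta> (pdiffs_limit [])" F] by simp
qed

end

theorem mainTheorem15:
  fixes \<Omega> :: "(real^'n::finite) set"
    and f :: "'i \<Rightarrow> real^'n \<Rightarrow> 'e::banach"
    and I :: "'i set" and R :: "'i \<Rightarrow> 'i \<Rightarrow> bool"
    and k :: nat and \<gamma> :: real
  assumes "open \<Omega>"
    and "0 < \<gamma>" and "\<gamma> \<le> 1"
    and "directed_set I R"
    and "\<forall>\<iota>\<in>I. Ck_gamma_loc k \<gamma> \<Omega> (f \<iota>)"
    and "\<forall>K. compact K \<and> K \<subseteq> \<Omega> \<longrightarrow> (\<exists>C. \<forall>\<iota>\<in>I. holder_bound k \<gamma> K (f \<iota>) C)"
    and "(\<exists>U. U \<subseteq> \<Omega> \<and> \<Omega> \<subseteq> closure U \<and>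
            (\<forall>x\<in>U. \<exists>l. ((\<lambda>\<iota>. f \<iota> x) \<longlongrightarrow> l) (net_filter I R)))
       \<or> (k \<ge> 1 \<and> connected \<Omega> \<and>
          (\<exists>U. U \<subseteq> \<Omega> \<and> \<Omega> \<subseteq> closure U \<and>
            (\<forall>n. \<forall>x\<in>U. \<exists>l. ((\<lambda>\<iota>. pdiff n (f \<iota>) x) \<longlongrightarrow> l) (net_filter I R))) \<and>
          (\<exists>x0\<in>\<Omega>. \<exists>l. ((\<lambda>\<iota>. f \<iota> x0) \<longlongrightarrow> l) (net_filter I R)))"
  shows "\<exists>g. Ck_gamma_loc k \<gamma> \<Omega> g \<and>
           (\<forall>K \<beta>. compact K \<longrightarrow> K \<subseteq> \<Omega> \<longrightarrow> length \<beta> \<le> k \<longrightarrow>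
              uniform_limit K (\<lambda>\<iota>. pdiffs \<beta> (f \<iota>)) (pdiffs \<beta> g) (net_filter I R))"
proof -
  interpret holder_bounded_family \<Omega> "net_filter I R" I f k \<gamma>
    using assms(1-6) net_filter_ne_bot[OF assms(4)] eventually_mem_net_filter[OF assms(4)]
    by unfold_locales (auto simp: Ck_gamma_loc_def)
  have "uniformly_cauchy_on (net_filter I R) K f" if K: "compact K" "K \<subseteq> \<Omega>" for K
    using assms(7)
  proof (elim disjE conjE exE bexE)
    fix U assume "\<Omega> \<subseteq> closure U" "\<forall>x\<in>U. \<exists>l. ((\<lambda>\<iota>. f \<iota> x) \<longlongrightarrow> l) (net_filter I R)"
    then show ?thesis by (rule uniformly_cauchy_on_from_dense_values[OF _ _ K])
  next
    fix U x0 l0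
    assume "1 \<le> k" "connected \<Omega>" "\<Omega> \<subseteq> closure U"
      "\<forall>n. \<forall>x\<in>U. \<exists>l. ((\<lambda>\<iota>. pdiff n (f \<iota>) x) \<longlongrightarrow> l) (net_filter I R)"
      "x0 \<in> \<Omega>" "((\<lambda>\<iota>. f \<iota> x0) \<longlongrightarrow> l0) (net_filter I R)"
    then show ?thesis by (rule uniformly_cauchy_on_from_dense_partials[OF _ _ _ _ _ _ K])
  qed
  then interpret holder_cauchy_family \<Omega> "net_filter I R" I f k \<gamma>
    by unfold_locales
  show ?thesis using limit_in_Ck_gamma_loc by blast
qed

end
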